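(* Let $p$ be a prime and $G_p^{rf}=\mathbb{Z}_{p^{r_1}}\oplus\mathbb{Z}_{p^{r_2}}\oplus\cdots\oplus\mathbb{Z}_{p^{r_k}}$ with $1\le r_1<r_2<\cdots<r_k$. Set $n_i=r_{i+1}-r_i$ for $1\le i\le k-1$. Then the number of orbits of the automorphism group $\mathrm{Aut}(G_p^{rf})$ acting on the elements of $G_p^{rf}$ is $$(r_1+1)(n_1+1)(n_2+1)\cdots(n_{k-1}+1).$$ *)

theory Defs
  imports "HOL-Algebra.Bij" "HOL-Computational_Algebra.Primes"
begin

text \<open>The finite abelian p-group Z_{p^{r_1}} + ... + Z_{p^{r_k}}, with the exponents
  given as a list rs = [r_1, ..., r_k].\<close>

definition Gpr :: "nat \<Rightarrow> nat list \<Rightarrow> nat list monoid" where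
  "Gpr p rs = \<lparr> carrier = {x. length x = length rs \<and> (\<forall>i<length rs. x ! i < p ^ (rs ! i))},
     monoid.mult = (\<lambda>x y. map (\<lambda>i. (x ! i + y ! i) mod p ^ (rs ! i)) [0..<length rs]),
     monoid.one = replicate (length rs) 0 \<rparr>"

definition aut_orbit :: "('a, 'b) monoid_scheme \<Rightarrow> 'a \<Rightarrow> 'a set" where
  "aut_orbit G x = {f x | f. f \<in> auto G}"

definition aut_orbits :: "('a, 'b) monoid_scheme \<Rightarrow> 'a set set" where
  "aut_orbits G = aut_orbit G ` carrier G"

end

theory Submission
  imports Defs "HOL-Algebra.Coset"
begin

(* Call a sequence e = (e_1, ..., e_k) admissible if 0 <= e_i <= r_i, e is non-decreasing
   and e_j - e_i <= r_j - r_i for i < j.  The proof shows that the orbits are in bijection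
   with the admissible sequences, e corresponding to the orbit of the canonical element
   (p^e_1, ..., p^e_k), and then counts these sequences.

   - Gpr p rs is a finite group, and automorphism orbits behave as expected in any group.
   - Invariance: for a <= r_i, the canonical element of e lies in p^a G + G[p^(r_i - a)]
     iff a <= e_i.  Membership in such a set is preserved by homomorphisms, so distinct
     admissible sequences give distinct orbits.
   - Surjectivity: an integer matrix (m_ij) with p^r_i | m_ij p^r_j and p not dividing
     m_ii induces an automorphism.  For every x we build such a matrix mapping the
     canonical element of the "type" E_i = min_j (v_p(x_j) + (r_i - r_j)) of x to x.
   - Counting: extending an admissible sequence by one entry allows exactly
     r_(k+1) - r_k + 1 choices, which gives (r_1 + 1) (n_1 + 1) ... (n_(k-1) + 1). *)

lemma Gpr_carrier:
  "carrier (Gpr p rs) = {x. length x = length rs \<and> (\<forall>i<length rs. x ! i < p ^ (rs ! i))}"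
  by (simp add: Gpr_def)

lemma Gpr_mult:
  "x \<otimes>\<^bsub>Gpr p rs\<^esub> y = map (\<lambda>i. (x ! i + y ! i) mod p ^ (rs ! i)) [0..<length rs]"
  by (simp add: Gpr_def)

lemma Gpr_one: "\<one>\<^bsub>Gpr p rs\<^esub> = replicate (length rs) 0"
  by (simp add: Gpr_def)

lemma Gpr_comm_group:
  assumes "0 < p"
  shows "comm_group (Gpr p rs)"
proof (rule comm_groupI)
  fix x y z
  show "x \<otimes>\<^bsub>Gpr p rs\<^esub> y \<otimes>\<^bsub>Gpr p rs\<^esub> z = x \<otimes>\<^bsub>Gpr p rs\<^esub> (y \<otimes>\<^bsub>Gpr p rs\<^esub> z)"
    by (rule nth_equalityI) (simp_all add: Gpr_mult mod_add_left_eq mod_add_right_eq add.assoc)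
next
  fix x y
  show "x \<otimes>\<^bsub>Gpr p rs\<^esub> y \<in> carrier (Gpr p rs)"
    using assms by (simp add: Gpr_carrier Gpr_mult)
  show "x \<otimes>\<^bsub>Gpr p rs\<^esub> y = y \<otimes>\<^bsub>Gpr p rs\<^esub> x"
    by (simp add: Gpr_mult add.commute)
next
  show "\<one>\<^bsub>Gpr p rs\<^esub> \<in> carrier (Gpr p rs)"
    using assms by (simp add: Gpr_carrier Gpr_one)
next
  fix x
  assume x: "x \<in> carrier (Gpr p rs)"
  then show "\<one>\<^bsub>Gpr p rs\<^esub> \<otimes>\<^bsub>Gpr p rs\<^esub> x = x"
    by (intro nth_equalityI) (simp_all add: Gpr_carrier Gpr_mult Gpr_one)
  let ?y = "map (\<lambda>i. (p ^ (rs ! i) - x ! i) mod p ^ (rs ! i)) [0..<length rs]"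
  have "?y \<in> carrier (Gpr p rs)"
    using assms by (simp add: Gpr_carrier)
  moreover have "?y \<otimes>\<^bsub>Gpr p rs\<^esub> x = \<one>\<^bsub>Gpr p rs\<^esub>"
    using x by (intro nth_equalityI) (auto simp: Gpr_carrier Gpr_mult Gpr_one mod_add_left_eq less_imp_le)
  ultimately show "\<exists>y\<in>carrier (Gpr p rs). y \<otimes>\<^bsub>Gpr p rs\<^esub> x = \<one>\<^bsub>Gpr p rs\<^esub>" ..
qed

lemma Gpr_group: "0 < p \<Longrightarrow> group (Gpr p rs)"
  using Gpr_comm_group comm_group.axioms(2) by blast

lemma Gpr_finite: "finite (carrier (Gpr p rs))"
proof -
  let ?B = "\<Sum>i<length rs. p ^ (rs ! i)"
  have "carrier (Gpr p rs) \<subseteq> {xs. set xs \<subseteq> {..<?B} \<and> length xs = length rs}"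
  proof
    fix x assume x: "x \<in> carrier (Gpr p rs)"
    have "x ! i < ?B" if "i < length rs" for i
    proof -
      have "p ^ (rs ! i) \<le> ?B" using that by (intro member_le_sum) auto
      with x that show ?thesis by (simp add: Gpr_carrier) (meson order_less_le_trans)
    qed
    with x show "x \<in> {xs. set xs \<subseteq> {..<?B} \<and> length xs = length rs}"
      by (auto simp: Gpr_carrier in_set_conv_nth)
  qed
  then show ?thesis by (rule finite_subset) (rule finite_lists_length_eq, simp)
qed

lemma Gpr_pow:
  assumes "x \<in> carrier (Gpr p rs)"
  shows "x [^]\<^bsub>Gpr p rs\<^esub> n = map (\<lambda>i. n * x ! i mod p ^ (rs ! i)) [0..<length rs]"
proof (induction n)
  case 0
  show ?case by (simp add: Gpr_one map_replicate_const)
next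
  case (Suc n)
  then show ?case
    using assms by (intro nth_equalityI) (simp_all add: Gpr_carrier Gpr_mult mod_add_right_eq add.commute)
qed

section \<open>Automorphism orbits in an arbitrary group\<close>

lemma (in group) aut_orbit_self: "x \<in> carrier G \<Longrightarrow> x \<in> aut_orbit G x"
  unfolding aut_orbit_def using id_in_auto by (intro CollectI exI[of _ "\<lambda>x\<in>carrier G. x"]) simp

text \<open>Since the automorphisms form a group (\<open>subgroup_auto\<close>), an element and its image under
  an automorphism have the same orbit.\<close>

lemma (in group) aut_orbit_auto_eq:
  assumes f: "f \<in> auto G" and x: "x \<in> carrier G"
  shows "aut_orbit G (f x) = aut_orbit G x"
proof -
  let ?comp = "compose (carrier G)"
  have comp_auto: "?comp g h \<in> auto G" if "g \<in> auto G" "h \<in> auto G" for g h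
    using subgroup.m_closed[OF subgroup_auto that] that by (simp add: BijGroup_def auto_def)
  let ?f' = "\<lambda>y\<in>carrier G. inv_into (carrier G) f y"
  have f_Bij: "f \<in> Bij (carrier G)" using f by (simp add: auto_def)
  have f': "?f' \<in> auto G"
    using subgroup.m_inv_closed[OF subgroup_auto f] by (simp add: inv_BijGroup[OF f_Bij])
  have fx: "f x \<in> carrier G" using f_Bij x by (meson Bij_imp_funcset funcset_mem)
  have f'_fx: "?f' (f x) = x"
    using f_Bij x fx by (auto simp: Bij_def bij_betw_def)
  show ?thesis
  proof (intro equalityI subsetI)
    fix y assume "y \<in> aut_orbit G (f x)"
    then obtain g where "g \<in> auto G" "y = g (f x)" by (auto simp: aut_orbit_def)
    then show "y \<in> aut_orbit G x"
      using comp_auto[of g f] f x unfolding aut_orbit_def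
      by (auto simp: compose_def intro!: exI[of _ "?comp g f"])
  next
    fix y assume "y \<in> aut_orbit G x"
    then obtain g where "g \<in> auto G" "y = g x" by (auto simp: aut_orbit_def)
    then show "y \<in> aut_orbit G (f x)"
      using comp_auto[of g ?f'] f' fx f'_fx unfolding aut_orbit_def
      by (auto simp: compose_def intro!: exI[of _ "?comp g ?f'"])
  qed
qed

text \<open>The set \<open>G\<^sup>a \<cdot> G[b]\<close> (additively: \<open>aG + G[b]\<close>, the sum of the \<open>a\<close>-th multiples and
  the \<open>b\<close>-torsion).  Homomorphisms map it into the corresponding set of the target, so
  membership of an element in it is an invariant of its automorphism orbit.\<close>

definition pow_torsion :: "('a, 'b) monoid_scheme \<Rightarrow> nat \<Rightarrow> nat \<Rightarrow> 'a set" where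
  "pow_torsion G a b = {z [^]\<^bsub>G\<^esub> a \<otimes>\<^bsub>G\<^esub> w | z w.
     z \<in> carrier G \<and> w \<in> carrier G \<and> w [^]\<^bsub>G\<^esub> b = \<one>\<^bsub>G\<^esub>}"

lemma hom_pow_torsion:
  assumes G: "group G" and H: "group H" and h: "h \<in> hom G H"
    and x: "x \<in> pow_torsion G a b"
  shows "h x \<in> pow_torsion H a b"
proof -
  obtain z w where z: "z \<in> carrier G" and w: "w \<in> carrier G" and w_tors: "w [^]\<^bsub>G\<^esub> b = \<one>\<^bsub>G\<^esub>"
    and x_eq: "x = z [^]\<^bsub>G\<^esub> a \<otimes>\<^bsub>G\<^esub> w"
    using x by (auto simp: pow_torsion_def)
  have "h x = h z [^]\<^bsub>H\<^esub> a \<otimes>\<^bsub>H\<^esub> h w"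
    using G H h z w by (simp add: x_eq hom_mult hom_nat_pow monoid.nat_pow_closed group.is_monoid)
  moreover have "h w [^]\<^bsub>H\<^esub> b = \<one>\<^bsub>H\<^esub>"
    using G H h w w_tors by (metis hom_nat_pow hom_one)
  ultimately show ?thesis
    using h z w unfolding pow_torsion_def by (blast intro: hom_in_carrier)
qed

section \<open>Endomorphisms given by integer matrices\<close>

text \<open>This is well defined on
  residues, and hence a homomorphism, as soon as \<open>p^r\<^sub>i\<close> divides \<open>m\<^sub>i\<^sub>j p^r\<^sub>j\<close> for all \<open>i, j\<close>.\<close>

definition mat_map :: "nat \<Rightarrow> nat list \<Rightarrow> (nat \<Rightarrow> nat \<Rightarrow> nat) \<Rightarrow> nat list \<Rightarrow> nat list" where
  "mat_map p rs m y = map (\<lambda>i. (\<Sum>j<length rs. m i j * y ! j) mod p ^ (rs ! i)) [0..<length rs]"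

lemma mod_mult_mod_eq_if_dvd:
  fixes q m r a :: nat
  assumes "q dvd m * r"
  shows "m * (a mod r) mod q = m * a mod q"
proof -
  obtain c where c: "m * r = q * c" using assms by blast
  have "m * a = m * (a mod r) + (m * r) * (a div r)"
    by (metis add_mult_distrib2 mod_div_mult_eq mult.assoc mult.commute)
  also have "\<dots> = m * (a mod r) + q * (c * (a div r))" by (simp add: c mult.assoc)
  finally show ?thesis by simp
qed

lemma mat_map_carrier: "0 < p \<Longrightarrow> mat_map p rs m y \<in> carrier (Gpr p rs)"
  by (simp add: mat_map_def Gpr_carrier)

lemma mat_map_mult:
  assumes D: "\<And>i j. i < length rs \<Longrightarrow> j < length rs \<Longrightarrow> p ^ (rs ! i) dvd m i j * p ^ (rs ! j)"
  shows "mat_map p rs m (x \<otimes>\<^bsub>Gpr p rs\<^esub> y) = mat_map p rs m x \<otimes>\<^bsub>Gpr p rs\<^esub> mat_map p rs m y"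
proof (rule nth_equalityI)
  fix i assume "i < length (mat_map p rs m (x \<otimes>\<^bsub>Gpr p rs\<^esub> y))"
  then have i: "i < length rs" by (simp add: mat_map_def)
  let ?k = "length rs" and ?q = "\<lambda>i. p ^ (rs ! i)"
  have "(\<Sum>j<?k. m i j * ((x ! j + y ! j) mod ?q j)) mod ?q i
      = (\<Sum>j<?k. m i j * ((x ! j + y ! j) mod ?q j) mod ?q i) mod ?q i"
    by (simp add: mod_sum_eq)
  also have "\<dots> = (\<Sum>j<?k. m i j * (x ! j + y ! j) mod ?q i) mod ?q i"
  proof (rule arg_cong[where f="\<lambda>t. t mod ?q i"], rule sum.cong[OF refl])
    fix j assume "j \<in> {..<?k}"
    then show "m i j * ((x ! j + y ! j) mod ?q j) mod ?q i = m i j * (x ! j + y ! j) mod ?q i"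
      by (intro mod_mult_mod_eq_if_dvd D i) simp
  qed
  also have "\<dots> = ((\<Sum>j<?k. m i j * x ! j) + (\<Sum>j<?k. m i j * y ! j)) mod ?q i"
    by (simp add: mod_sum_eq distrib_left sum.distrib)
  also have "\<dots> = ((\<Sum>j<?k. m i j * x ! j) mod ?q i + (\<Sum>j<?k. m i j * y ! j) mod ?q i) mod ?q i"
    by (simp add: mod_add_eq)
  finally show "mat_map p rs m (x \<otimes>\<^bsub>Gpr p rs\<^esub> y) ! i = (mat_map p rs m x \<otimes>\<^bsub>Gpr p rs\<^esub> mat_map p rs m y) ! i"
    using i by (simp add: mat_map_def Gpr_mult)
qed (simp add: mat_map_def Gpr_mult)

lemma exists_last_minimiser:
  fixes w :: "nat \<Rightarrow> nat"
  assumes fin: "finite N" and ne: "N \<noteq> {}"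
  obtains I where "I \<in> N" "\<And>j. j \<in> N \<Longrightarrow> w I \<le> w j" "\<And>j. j \<in> N \<Longrightarrow> I < j \<Longrightarrow> w I < w j"
proof -
  define W where "W = Min (w ` N)"
  define I where "I = Max {j \<in> N. w j = W}"
  have W_le: "W \<le> w j" if "j \<in> N" for j
    unfolding W_def using fin that by (intro Min_le) auto
  have "W \<in> w ` N" unfolding W_def using fin ne by (intro Min_in) auto
  then have I: "I \<in> N" "w I = W" unfolding I_def using fin Max_in[of "{j \<in> N. w j = W}"] by auto
  have "W < w j" if "j \<in> N" "I < j" for j
  proof (rule ccontr)
    assume "\<not> W < w j"
    then have "j \<in> {j \<in> N. w j = W}" using W_le that(1) by force
    then have "j \<le> I" unfolding I_def using fin by (intro Max_ge) auto
    with that(2) show False by simp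
  qed
  with I W_le show ?thesis using that[of I] by simp
qed

lemma multiplicity_less_exp:
  fixes p x :: nat
  assumes "1 < p" "0 < x" "x < p ^ r"
  shows "multiplicity p x < r"
proof -
  have "p ^ multiplicity p x \<le> x" by (rule dvd_imp_le[OF multiplicity_dvd assms(2)])
  with assms show ?thesis by (meson order_le_less_trans power_less_imp_less_exp)
qed

lemma Gpr_nonzero_coord:
  assumes "z \<in> carrier (Gpr p rs)" "z \<noteq> \<one>\<^bsub>Gpr p rs\<^esub>"
  shows "\<exists>j<length rs. z ! j \<noteq> 0"
  using assms by (auto simp: Gpr_carrier Gpr_one intro!: nth_equalityI)

lemma compatible_entry_dvd:
  fixes p c :: nat
  assumes "1 < p" and "p ^ r dvd c * p ^ s" and "s < r"
  shows "p dvd c"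
proof -
  have "p ^ s * p dvd p ^ r" using \<open>s < r\<close> by (metis Suc_leI le_imp_power_dvd power_Suc2)
  then have "p ^ s * p dvd p ^ s * c" using assms(2) by (metis dvd_trans mult.commute)
  then show ?thesis using \<open>1 < p\<close> by simp
qed

lemma prime_power_dvd_cancel:
  fixes p a b s :: nat
  assumes "prime p" "\<not> p dvd a" "p ^ n dvd a * b + s" "p ^ n dvd s"
  shows "p ^ n dvd b"
proof -
  have "coprime (p ^ n) a" using assms(1,2) by (simp add: prime_imp_coprime)
  moreover have "p ^ n dvd a * b" using assms(3,4) by (simp add: dvd_add_left_iff)
  ultimately show ?thesis by (simp add: coprime_dvd_mult_right_iff)
qed

text \<open>For a nonzero \<open>z\<close> in the kernel, take the last coordinate \<open>I\<close> of
  minimal \<open>p\<close>-valuation \<open>W\<close>.  In row \<open>I\<close> every term \<open>m\<^sub>I\<^sub>j z\<^sub>j\<close> with \<open>j \<noteq> I\<close> is divisible by \<open>p\<^bsup>W+1\<^esup>\<close>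
  (for \<open>j > I\<close> because \<open>z\<^sub>j\<close> is, for \<open>j < I\<close> because \<open>p | m\<^sub>I\<^sub>j\<close>), and so is the whole row, which
  vanishes modulo \<open>p\<^bsup>r\<^sub>I\<^esup>\<close>, with \<open>W < r\<^sub>I\<close>.  This forces \<open>p\<^bsup>W+1\<^esup> | z\<^sub>I\<close>, a contradiction.\<close>

lemma mat_map_kernel:
  assumes p: "prime p" and sorted: "sorted_wrt (<) rs"
    and D: "\<And>i j. i < length rs \<Longrightarrow> j < length rs \<Longrightarrow> p ^ (rs ! i) dvd m i j * p ^ (rs ! j)"
    and U: "\<And>i. i < length rs \<Longrightarrow> \<not> p dvd m i i"
    and z: "z \<in> carrier (Gpr p rs)" and kernel: "mat_map p rs m z = \<one>\<^bsub>Gpr p rs\<^esub>"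
  shows "z = \<one>\<^bsub>Gpr p rs\<^esub>"
proof (rule ccontr)
  assume "z \<noteq> \<one>\<^bsub>Gpr p rs\<^esub>"
  let ?k = "length rs" and ?v = "\<lambda>j. multiplicity p (z ! j)"
  define N where "N = {j. j < ?k \<and> z ! j \<noteq> 0}"
  have "N \<noteq> {}" using Gpr_nonzero_coord[OF z \<open>z \<noteq> _\<close>] by (auto simp: N_def)
  moreover have "finite N" by (simp add: N_def)
  ultimately obtain I where "I \<in> N" and min: "\<And>j. j \<in> N \<Longrightarrow> ?v I \<le> ?v j"
    and last: "\<And>j. j \<in> N \<Longrightarrow> I < j \<Longrightarrow> ?v I < ?v j"
    using exists_last_minimiser[of N ?v] by blast
  then have I: "I < ?k" and zI: "z ! I \<noteq> 0" by (auto simp: N_def)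
  define W where "W = ?v I"
  have p1: "1 < p" using p prime_gt_1_nat by blast
  have "W < rs ! I"
    unfolding W_def using multiplicity_less_exp[OF p1] zI z I by (simp add: Gpr_carrier)
  then have "p ^ Suc W dvd p ^ (rs ! I)" by (intro le_imp_power_dvd) simp
  also have "p ^ (rs ! I) dvd (\<Sum>j<?k. m I j * z ! j)"
    using arg_cong[OF kernel, of "\<lambda>y. y ! I"] I by (simp add: mat_map_def Gpr_one mod_eq_0_iff_dvd)
  also have "(\<Sum>j<?k. m I j * z ! j) = m I I * z ! I + (\<Sum>j\<in>{..<?k} - {I}. m I j * z ! j)"
    using I by (subst sum.remove[of _ I]) auto
  finally have row: "p ^ Suc W dvd m I I * z ! I + (\<Sum>j\<in>{..<?k} - {I}. m I j * z ! j)" .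
  have "p ^ Suc W dvd m I j * z ! j" if j: "j < ?k" "j \<noteq> I" for j
  proof (cases "z ! j = 0")
    case False
    then have jN: "j \<in> N" using j by (simp add: N_def)
    consider (before) "j < I" | (after) "I < j" using j(2) by linarith
    then show ?thesis
    proof cases
      case before
      then have "p dvd m I j"
        using compatible_entry_dvd[OF p1 D[OF I j(1)]] sorted_wrt_nth_less[OF sorted before I] by blast
      moreover have "p ^ W dvd z ! j" using min[OF jN] by (simp add: W_def multiplicity_dvd')
      ultimately show ?thesis by (simp add: mult_dvd_mono)
    next
      case after
      then have "p ^ Suc W dvd z ! j"
        using last[OF jN] unfolding W_def by (intro multiplicity_dvd') simp
      then show ?thesis by simp
    qed
  qed simp
  then have "p ^ Suc W dvd (\<Sum>j\<in>{..<?k} - {I}. m I j * z ! j)" by (intro dvd_sum) auto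
  then have "p ^ Suc W dvd z ! I" using prime_power_dvd_cancel[OF p U[OF I] row] by blast
  then show False
    using zI p1 power_dvd_iff_le_multiplicity[OF zI, of p "Suc W"] by (simp add: W_def)
qed

text \<open>Consequently such a matrix map is an automorphism: it is an injective endomorphism
  of a finite group.\<close>

lemma mat_map_auto:
  assumes p: "prime p" and sorted: "sorted_wrt (<) rs"
    and D: "\<And>i j. i < length rs \<Longrightarrow> j < length rs \<Longrightarrow> p ^ (rs ! i) dvd m i j * p ^ (rs ! j)"
    and U: "\<And>i. i < length rs \<Longrightarrow> \<not> p dvd m i i"
  shows "(\<lambda>y\<in>carrier (Gpr p rs). mat_map p rs m y) \<in> auto (Gpr p rs)"
proof -
  let ?G = "Gpr p rs" and ?f = "\<lambda>y\<in>carrier (Gpr p rs). mat_map p rs m y"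
  have p0: "0 < p" using p prime_gt_0_nat by blast
  interpret group ?G using Gpr_group[OF p0] .
  have hom: "?f \<in> hom ?G ?G"
    by (rule homI) (simp_all add: mat_map_carrier[OF p0] mat_map_mult[OF D])
  have "inj_on ?f (carrier ?G)"
    unfolding inj_on_one_iff'[OF hom is_group is_group] using mat_map_kernel[OF p sorted D U] by simp
  moreover have "?f ` carrier ?G \<subseteq> carrier ?G" using mat_map_carrier[OF p0] by auto
  ultimately have "bij_betw ?f (carrier ?G) (carrier ?G)"
    using endo_inj_surj[OF Gpr_finite] by (simp add: bij_betw_def)
  with hom show ?thesis by (simp add: auto_def Bij_def)
qed

section \<open>Admissible exponent sequences and canonical elements\<close>

text \<open>These sequences will index the orbits: the
  orbit of \<open>e\<close> is the one containing the canonical element \<open>(p\<^bsup>e\<^sub>1\<^esup>, \<dots>, p\<^bsup>e\<^sub>k\<^esup>)\<close> (where \<open>p\<^bsup>r\<^sub>i\<^esup> = 0\<close>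
  in the \<open>i\<close>-th component).\<close>

definition admissible :: "nat list \<Rightarrow> nat list \<Rightarrow> bool" where
  "admissible rs e \<longleftrightarrow> length e = length rs \<and> (\<forall>i<length rs. e ! i \<le> rs ! i) \<and>
     (\<forall>i j. i < j \<longrightarrow> j < length rs \<longrightarrow> e ! i \<le> e ! j \<and> e ! j + rs ! i \<le> e ! i + rs ! j)"

definition canonical :: "nat \<Rightarrow> nat list \<Rightarrow> nat list \<Rightarrow> nat list" where
  "canonical p rs e = map (\<lambda>i. p ^ (e ! i) mod p ^ (rs ! i)) [0..<length rs]"

lemma admissible_length: "admissible rs e \<Longrightarrow> length e = length rs"
  by (simp add: admissible_def)

lemma admissible_le: "admissible rs e \<Longrightarrow> i < length rs \<Longrightarrow> e ! i \<le> rs ! i"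
  by (simp add: admissible_def)

lemma admissible_mono: "admissible rs e \<Longrightarrow> i < j \<Longrightarrow> j < length rs \<Longrightarrow> e ! i \<le> e ! j"
  by (simp add: admissible_def)

lemma admissible_increment:
  "admissible rs e \<Longrightarrow> i < j \<Longrightarrow> j < length rs \<Longrightarrow> e ! j + rs ! i \<le> e ! i + rs ! j"
  by (simp add: admissible_def)

lemma canonical_carrier: "0 < p \<Longrightarrow> canonical p rs e \<in> carrier (Gpr p rs)"
  by (simp add: canonical_def Gpr_carrier)

text \<open>The canonical element of \<open>e\<close> lies in \<open>p\<^sup>aG + G[p\<^bsup>r\<^sub>i-a\<^esup>]\<close> whenever \<open>a \<le> e\<^sub>i\<close>: the
  components with \<open>e\<^sub>j \<ge> a\<close> are \<open>p\<^sup>a\<close>-multiples, and the others (necessarily \<open>j < i\<close>) are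
  killed by \<open>p\<^bsup>r\<^sub>i-a\<^esup>\<close> thanks to the increment bound.\<close>

lemma canonical_in_pow_torsion:
  assumes p: "0 < p" and adm: "admissible rs e" and i: "i < length rs" and a: "a \<le> e ! i"
  shows "canonical p rs e \<in> pow_torsion (Gpr p rs) (p ^ a) (p ^ (rs ! i - a))"
proof -
  let ?k = "length rs" and ?q = "\<lambda>j. p ^ (rs ! j)" and ?b = "rs ! i - a"
  define z where "z = map (\<lambda>j. if a \<le> e ! j then p ^ (e ! j - a) mod ?q j else 0) [0..<?k]"
  define w where "w = map (\<lambda>j. if a \<le> e ! j then 0 else p ^ (e ! j) mod ?q j) [0..<?k]"
  have z: "z \<in> carrier (Gpr p rs)" and w: "w \<in> carrier (Gpr p rs)"
    using p by (simp_all add: z_def w_def Gpr_carrier)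
  have "canonical p rs e = z [^]\<^bsub>Gpr p rs\<^esub> p ^ a \<otimes>\<^bsub>Gpr p rs\<^esub> w"
  proof (rule nth_equalityI)
    fix j assume "j < length (canonical p rs e)"
    then have j: "j < ?k" by (simp add: canonical_def)
    have "p ^ a * (p ^ (e ! j - a) mod ?q j) mod ?q j = p ^ (e ! j) mod ?q j" if "a \<le> e ! j"
      using that by (simp add: mod_mult_right_eq flip: power_add)
    then show "canonical p rs e ! j = (z [^]\<^bsub>Gpr p rs\<^esub> p ^ a \<otimes>\<^bsub>Gpr p rs\<^esub> w) ! j"
      using j z by (simp add: canonical_def Gpr_pow Gpr_mult z_def w_def)
  qed (simp add: canonical_def Gpr_mult)
  moreover have "w [^]\<^bsub>Gpr p rs\<^esub> p ^ ?b = \<one>\<^bsub>Gpr p rs\<^esub>"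
  proof (rule nth_equalityI)
    fix j assume "j < length (w [^]\<^bsub>Gpr p rs\<^esub> p ^ ?b)"
    then have j: "j < ?k" using w by (simp add: Gpr_pow)
    have "p ^ ?b * p ^ (e ! j) mod ?q j = 0" if small: "e ! j < a"
    proof -
      have "j < i"
      proof (rule ccontr)
        assume "\<not> j < i"
        then have "e ! i \<le> e ! j" using admissible_mono[OF adm _ j] by (cases "i = j") auto
        with small a show False by simp
      qed
      then have "e ! i + rs ! j \<le> e ! j + rs ! i" by (rule admissible_increment[OF adm _ i])
      then have "rs ! j \<le> ?b + e ! j" using a admissible_le[OF adm i] by linarith
      then show ?thesis by (simp add: le_imp_power_dvd flip: power_add)
    qed
    then show "(w [^]\<^bsub>Gpr p rs\<^esub> p ^ ?b) ! j = \<one>\<^bsub>Gpr p rs\<^esub> ! j"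
      using j w by (simp add: Gpr_pow Gpr_one w_def mod_mult_right_eq)
  qed (use w in \<open>simp add: Gpr_pow Gpr_one\<close>)
  ultimately show ?thesis using z w unfolding pow_torsion_def by blast
qed

text \<open>Conversely, membership in \<open>p\<^sup>aG + G[p\<^bsup>r\<^sub>i-a\<^esup>]\<close> forces \<open>a \<le> e\<^sub>i\<close>: in the \<open>i\<close>-th component
  both summands are divisible by \<open>p\<^sup>a\<close>, while \<open>p\<^bsup>e\<^sub>i\<^esup>\<close> is not when \<open>e\<^sub>i < a\<close>.\<close>

lemma pow_torsion_canonical:
  assumes p: "prime p" and adm: "admissible rs e" and i: "i < length rs" and a: "a \<le> rs ! i"
    and mem: "canonical p rs e \<in> pow_torsion (Gpr p rs) (p ^ a) (p ^ (rs ! i - a))"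
  shows "a \<le> e ! i"
proof (rule ccontr)
  assume "\<not> a \<le> e ! i"
  then have small: "e ! i < a" by simp
  let ?q = "p ^ (rs ! i)" and ?b = "rs ! i - a"
  have p1: "1 < p" using p prime_gt_1_nat by blast
  obtain z w where z: "z \<in> carrier (Gpr p rs)" and w: "w \<in> carrier (Gpr p rs)"
    and tors: "w [^]\<^bsub>Gpr p rs\<^esub> p ^ ?b = \<one>\<^bsub>Gpr p rs\<^esub>"
    and eq: "canonical p rs e = z [^]\<^bsub>Gpr p rs\<^esub> p ^ a \<otimes>\<^bsub>Gpr p rs\<^esub> w"
    using mem by (auto simp: pow_torsion_def)
  have q_split: "?q = p ^ ?b * p ^ a" using a by (simp flip: power_add)
  have "p ^ ?b * w ! i mod ?q = 0"
    using arg_cong[OF tors, of "\<lambda>y. y ! i"] i w by (simp add: Gpr_pow Gpr_one)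
  then have "p ^ ?b * p ^ a dvd p ^ ?b * w ! i" by (simp add: q_split mod_eq_0_iff_dvd)
  then have w_dvd: "p ^ a dvd w ! i" using p1 by simp
  have pa_q: "p ^ a dvd ?q" using a by (simp add: le_imp_power_dvd)
  have "p ^ (e ! i) mod ?q = (p ^ a * z ! i mod ?q + w ! i) mod ?q"
    using arg_cong[OF eq, of "\<lambda>y. y ! i"] i z by (simp add: canonical_def Gpr_pow Gpr_mult)
  also have "p ^ a dvd \<dots>"
    using pa_q w_dvd by (simp add: dvd_mod)
  also have "p ^ (e ! i) mod ?q = p ^ (e ! i)"
    using small a p1 by (simp add: power_strict_increasing)
  finally have "a \<le> e ! i" using p1 by (simp add: dvd_power_iff_le)
  with small show False by simp
qed

text \<open>Hence the sequence \<open>e\<close> can be read off from the orbit of its canonical element: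
  automorphisms can only increase it (componentwise), and so orbits of distinct admissible
  sequences are distinct.\<close>

lemma canonical_orbit_le:
  assumes p: "prime p" and adm: "admissible rs e" and adm': "admissible rs e'"
    and orbit: "canonical p rs e' \<in> aut_orbit (Gpr p rs) (canonical p rs e)" and i: "i < length rs"
  shows "e ! i \<le> e' ! i"
proof -
  have p0: "0 < p" using p prime_gt_0_nat by blast
  obtain f where f: "f \<in> auto (Gpr p rs)" and f_e: "canonical p rs e' = f (canonical p rs e)"
    using orbit by (auto simp: aut_orbit_def)
  have hom: "f \<in> hom (Gpr p rs) (Gpr p rs)" using f by (simp add: auto_def)
  have "canonical p rs e \<in> pow_torsion (Gpr p rs) (p ^ (e ! i)) (p ^ (rs ! i - e ! i))"
    by (rule canonical_in_pow_torsion[OF p0 adm i le_refl])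
  then have "canonical p rs e' \<in> pow_torsion (Gpr p rs) (p ^ (e ! i)) (p ^ (rs ! i - e ! i))"
    unfolding f_e by (rule hom_pow_torsion[OF Gpr_group[OF p0] Gpr_group[OF p0] hom])
  then show ?thesis by (rule pow_torsion_canonical[OF p adm' i admissible_le[OF adm i]])
qed

lemma canonical_orbit_inj:
  assumes p: "prime p"
  shows "inj_on (\<lambda>e. aut_orbit (Gpr p rs) (canonical p rs e)) {e. admissible rs e}"
proof (rule inj_onI)
  fix e e' assume "e \<in> {e. admissible rs e}" "e' \<in> {e. admissible rs e}"
  then have adm: "admissible rs e" and adm': "admissible rs e'" by simp_all
  assume same: "aut_orbit (Gpr p rs) (canonical p rs e) = aut_orbit (Gpr p rs) (canonical p rs e')"
  have p0: "0 < p" using p prime_gt_0_nat by blast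
  interpret group "Gpr p rs" by (rule Gpr_group[OF p0])
  have "canonical p rs e' \<in> aut_orbit (Gpr p rs) (canonical p rs e)"
    and "canonical p rs e \<in> aut_orbit (Gpr p rs) (canonical p rs e')"
    using same aut_orbit_self[OF canonical_carrier[OF p0]] by auto
  then have "e ! i = e' ! i" if "i < length rs" for i
    using canonical_orbit_le[OF p adm adm'] canonical_orbit_le[OF p adm' adm] that
    by (simp add: le_antisym)
  then show "e = e'"
    using admissible_length[OF adm] admissible_length[OF adm'] by (simp add: nth_equalityI)
qed

section \<open>Every orbit contains a canonical element\<close>

text \<open>The valuation of the \<open>j\<close>-th coordinate of \<open>x\<close> (equal to \<open>r\<^sub>j\<close> for a zero coordinate) and
  the type of \<open>x\<close>: \<open>E\<^sub>i = min\<^sub>j (v\<^sub>j + (r\<^sub>i - r\<^sub>j))\<close>, with truncated subtraction.  The type is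
  admissible, and some matrix automorphism maps its canonical element to \<open>x\<close>.\<close>

definition coord_val :: "nat \<Rightarrow> nat list \<Rightarrow> nat list \<Rightarrow> nat \<Rightarrow> nat" where
  "coord_val p rs x j = (if x ! j = 0 then rs ! j else multiplicity p (x ! j))"

definition type_exp :: "nat \<Rightarrow> nat list \<Rightarrow> nat list \<Rightarrow> nat \<Rightarrow> nat" where
  "type_exp p rs x i = Min ((\<lambda>j. coord_val p rs x j + (rs ! i - rs ! j)) ` {..<length rs})"

definition type_seq :: "nat \<Rightarrow> nat list \<Rightarrow> nat list \<Rightarrow> nat list" where
  "type_seq p rs x = map (type_exp p rs x) [0..<length rs]"

lemma coord_val_dvd: "p ^ coord_val p rs x j dvd x ! j"
  by (simp add: coord_val_def multiplicity_dvd)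

lemma type_exp_le:
  "i < length rs \<Longrightarrow> j < length rs \<Longrightarrow> type_exp p rs x i \<le> coord_val p rs x j + (rs ! i - rs ! j)"
  unfolding type_exp_def by (rule Min_le) auto

lemma type_exp_attained:
  assumes "i < length rs"
  shows "\<exists>l<length rs. type_exp p rs x i = coord_val p rs x l + (rs ! i - rs ! l)"
proof -
  have "type_exp p rs x i \<in> (\<lambda>j. coord_val p rs x j + (rs ! i - rs ! j)) ` {..<length rs}"
    unfolding type_exp_def using assms by (intro Min_in) auto
  then show ?thesis by auto
qed

lemma type_exp_le_coord_val: "i < length rs \<Longrightarrow> type_exp p rs x i \<le> coord_val p rs x i"
  using type_exp_le[of i rs i] by simp

text \<open>Adding \<open>t - 1\<close> copies of \<open>a\<close> to \<open>a\<close>, with \<open>t - 1\<close> written as \<open>t + q - 1\<close> modulo \<open>q\<close>.\<close>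

lemma add_mult_pred_eq:
  fixes a t q :: nat
  assumes "0 < q"
  shows "a + a * (t + q - 1) = t * a + a * q"
proof -
  have "t + q - 1 + 1 = t + q" using assms by simp
  then have "a + a * (t + q - 1) = a * (t + q)" by (metis add.commute distrib_left mult.right_neutral)
  then show ?thesis by (simp add: algebra_simps)
qed

context
  fixes p :: nat and rs :: "nat list" and x :: "nat list"
  assumes p: "prime p" and sorted: "sorted_wrt (<) rs" and x: "x \<in> carrier (Gpr p rs)"
begin

private abbreviation (input) "k \<equiv> length rs"
private abbreviation (input) "v \<equiv> coord_val p rs x"
private abbreviation (input) "E \<equiv> type_exp p rs x"

private lemma p_gt_1: "1 < p" using p prime_gt_1_nat by blast

private lemma x_less: "j < k \<Longrightarrow> x ! j < p ^ (rs ! j)" using x by (simp add: Gpr_carrier)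

lemma coord_val_less: "j < k \<Longrightarrow> x ! j \<noteq> 0 \<Longrightarrow> v j < rs ! j"
  using multiplicity_less_exp[OF p_gt_1] x_less by (simp add: coord_val_def)

lemma coord_val_le: "j < k \<Longrightarrow> v j \<le> rs ! j"
  using coord_val_less by (cases "x ! j = 0") (auto simp: coord_val_def less_imp_le)

lemma coord_val_cofactor: "x ! j \<noteq> 0 \<Longrightarrow> \<not> p dvd x ! j div p ^ v j"
proof
  assume nz: "x ! j \<noteq> 0" and "p dvd x ! j div p ^ v j"
  moreover have "x ! j = x ! j div p ^ v j * p ^ v j" using coord_val_dvd by simp
  ultimately have "p ^ Suc (v j) dvd x ! j" by (metis mult_dvd_mono dvd_refl power_Suc)
  then have "Suc (v j) \<le> multiplicity p (x ! j)"
    using power_dvd_iff_le_multiplicity[OF nz, of p "Suc (v j)"] p_gt_1 by simp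
  with nz show False by (simp add: coord_val_def)
qed

lemma admissible_type_seq: "admissible rs (type_seq p rs x)"
proof -
  have "E i \<le> E j \<and> E j + rs ! i \<le> E i + rs ! j" if ij: "i < j" "j < k" for i j
  proof -
    have i: "i < k" and less: "rs ! i < rs ! j" using ij sorted_wrt_nth_less[OF sorted] by auto
    obtain l where "l < k" "E j = v l + (rs ! j - rs ! l)" using type_exp_attained[OF ij(2)] by blast
    moreover obtain l' where "l' < k" "E i = v l' + (rs ! i - rs ! l')" using type_exp_attained[OF i] by blast
    ultimately show ?thesis
      using type_exp_le[where p = p and x = x, OF i \<open>l < k\<close>]
        type_exp_le[where p = p and x = x, OF ij(2) \<open>l' < k\<close>] less by linarith
  qed
  moreover have "E i \<le> rs ! i" if "i < k" for i
    using type_exp_le_coord_val[where p = p and x = x, OF that] coord_val_le[OF that] by simp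
  ultimately show ?thesis by (simp add: admissible_def type_seq_def)
qed

text \<open>The matrix of an automorphism mapping the canonical element of the type to \<open>x\<close>.  Write
  \<open>x\<^sub>i = p\<^bsup>E\<^sub>i\<^esup> t\<^sub>i\<close>.  If \<open>E\<^sub>i = v\<^sub>i\<close> (and \<open>x\<^sub>i \<noteq> 0\<close>), the row multiplies the \<open>i\<close>-th coordinate by the unit \<open>t\<^sub>i\<close>;
  otherwise it keeps the coordinate \<open>p\<^bsup>E\<^sub>i\<^esup>\<close> and adds \<open>p\<^bsup>E\<^sub>i - E\<^sub>l\<^esup> (t\<^sub>i - 1)\<close> times the coordinate \<open>p\<^bsup>E\<^sub>l\<^esup>\<close>
  of an index \<open>l \<noteq> i\<close> attaining the minimum defining \<open>E\<^sub>i\<close> (\<open>t\<^sub>i - 1\<close> is written \<open>t\<^sub>i + p\<^bsup>r\<^sub>i\<^esup> - 1\<close>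
  to stay in the naturals).\<close>

definition cofactor :: "nat \<Rightarrow> nat" where
  "cofactor i = x ! i div p ^ E i"

definition min_index :: "nat \<Rightarrow> nat" where
  "min_index i = (SOME l. l < k \<and> E i = v l + (rs ! i - rs ! l))"

definition lift_matrix :: "nat \<Rightarrow> nat \<Rightarrow> nat" where
  "lift_matrix i j =
    (if j = i then (if v i = E i \<and> x ! i \<noteq> 0 then cofactor i else 1)
     else if v i \<noteq> E i \<and> j = min_index i then p ^ (E i - E (min_index i)) * (cofactor i + p ^ (rs ! i) - 1)
     else 0)"

lemma min_index: "i < k \<Longrightarrow> min_index i < k \<and> E i = v (min_index i) + (rs ! i - rs ! min_index i)"
  unfolding min_index_def using type_exp_attained by (rule someI_ex)

lemma min_index_le: "i < k \<Longrightarrow> E (min_index i) + (rs ! i - rs ! min_index i) \<le> E i"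
  using min_index[of i] type_exp_le_coord_val[where p = p and x = x, of "min_index i"] by simp

lemma cofactor_mult: "i < k \<Longrightarrow> cofactor i * p ^ E i = x ! i"
proof -
  assume i: "i < k"
  have "p ^ E i dvd p ^ v i"
    using type_exp_le_coord_val[where p = p and x = x, OF i] by (simp add: le_imp_power_dvd)
  then have "p ^ E i dvd x ! i" using coord_val_dvd dvd_trans by blast
  then show ?thesis by (simp add: cofactor_def)
qed

lemma lift_matrix_compatible:
  assumes i: "i < k" and j: "j < k"
  shows "p ^ (rs ! i) dvd lift_matrix i j * p ^ (rs ! j)"
proof (cases "j \<noteq> i \<and> v i \<noteq> E i \<and> j = min_index i")
  case True
  let ?l = "min_index i"
  have "rs ! i \<le> (E i - E ?l) + rs ! ?l" using min_index_le[OF i] by linarith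
  then have "p ^ (rs ! i) dvd p ^ (E i - E ?l) * p ^ (rs ! ?l)" by (simp add: le_imp_power_dvd flip: power_add)
  then show ?thesis using True by (simp add: lift_matrix_def mult_dvd_mono mult.assoc mult.left_commute)
qed (auto simp: lift_matrix_def)

lemma lift_matrix_diagonal: "i < k \<Longrightarrow> \<not> p dvd lift_matrix i i"
  using coord_val_cofactor[of i] p_gt_1 by (auto simp: lift_matrix_def cofactor_def)

lemma canonical_type_seq_nth:
  "i < k \<Longrightarrow> canonical p rs (type_seq p rs x) ! i = p ^ E i mod p ^ (rs ! i)"
  by (simp add: canonical_def type_seq_def)

lemma lift_row_scaling:
  assumes i: "i < k" and attained: "v i = E i"
  shows "(\<Sum>j<k. lift_matrix i j * canonical p rs (type_seq p rs x) ! j) mod p ^ (rs ! i) = x ! i"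
proof -
  let ?c = "canonical p rs (type_seq p rs x)"
  have "(\<Sum>j<k. lift_matrix i j * ?c ! j) = lift_matrix i i * ?c ! i"
    using i by (subst sum.remove[of _ i]) (auto simp: lift_matrix_def attained)
  moreover have "lift_matrix i i * ?c ! i mod p ^ (rs ! i) = x ! i"
  proof (cases "x ! i = 0")
    case True
    then show ?thesis using i attained by (simp add: canonical_type_seq_nth coord_val_def)
  next
    case False
    then have "E i < rs ! i" using coord_val_less[OF i] attained by simp
    then have "?c ! i = p ^ E i" using i p_gt_1 by (simp add: canonical_type_seq_nth power_strict_increasing)
    then show ?thesis using i False attained cofactor_mult[OF i] x_less[OF i] by (simp add: lift_matrix_def)
  qed
  ultimately show ?thesis by simp
qed

lemma lift_row_transfer:
  assumes i: "i < k" and not_attained: "v i \<noteq> E i"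
  shows "(\<Sum>j<k. lift_matrix i j * canonical p rs (type_seq p rs x) ! j) mod p ^ (rs ! i) = x ! i"
proof -
  let ?c = "canonical p rs (type_seq p rs x)" and ?l = "min_index i" and ?q = "p ^ (rs ! i)"
  define M where "M = p ^ (E i - E ?l) * (cofactor i + ?q - 1)"
  have l: "?l < k" and l_ne: "?l \<noteq> i" using min_index[OF i] not_attained by auto
  have "(\<Sum>j<k. lift_matrix i j * ?c ! j) = (\<Sum>j\<in>{i, ?l}. lift_matrix i j * ?c ! j)"
    using i l by (intro sum.mono_neutral_right) (auto simp: lift_matrix_def)
  also have "\<dots> = lift_matrix i i * ?c ! i + lift_matrix i ?l * ?c ! ?l"
    using l_ne by simp
  also have "\<dots> = p ^ E i + M * (p ^ E ?l mod p ^ (rs ! ?l))"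
  proof -
    have "E i < rs ! i"
      using type_exp_le_coord_val[where p = p and x = x, OF i] coord_val_le[OF i] not_attained by simp
    then show ?thesis
      using i l l_ne not_attained p_gt_1
      by (simp add: lift_matrix_def M_def canonical_type_seq_nth power_strict_increasing)
  qed
  finally have row: "(\<Sum>j<k. lift_matrix i j * ?c ! j) = p ^ E i + M * (p ^ E ?l mod p ^ (rs ! ?l))" .
  have "?q dvd M * p ^ (rs ! ?l)"
    using lift_matrix_compatible[OF i l] l_ne not_attained by (simp add: lift_matrix_def M_def)
  then have "M * (p ^ E ?l mod p ^ (rs ! ?l)) mod ?q = M * p ^ E ?l mod ?q"
    by (rule mod_mult_mod_eq_if_dvd)
  then have "(\<Sum>j<k. lift_matrix i j * ?c ! j) mod ?q = (p ^ E i + M * p ^ E ?l) mod ?q"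
    unfolding row by (metis mod_add_right_eq)
  also have "p ^ E i + M * p ^ E ?l = x ! i + p ^ E i * ?q"
  proof -
    have "E ?l \<le> E i" using min_index_le[OF i] by linarith
    then have "M * p ^ E ?l = p ^ E i * (cofactor i + ?q - 1)"
      by (simp add: M_def mult.commute mult.left_commute flip: power_add)
    moreover have "0 < ?q" using p_gt_1 by simp
    ultimately show ?thesis using add_mult_pred_eq cofactor_mult[OF i] by simp
  qed
  finally show ?thesis using x_less[OF i] by simp
qed

lemma lift_matrix_canonical: "mat_map p rs lift_matrix (canonical p rs (type_seq p rs x)) = x"
proof (rule nth_equalityI)
  show "length (mat_map p rs lift_matrix (canonical p rs (type_seq p rs x))) = length x"
    using x by (simp add: mat_map_def Gpr_carrier)
  fix i assume "i < length (mat_map p rs lift_matrix (canonical p rs (type_seq p rs x)))"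
  then have i: "i < k" by (simp add: mat_map_def)
  then show "mat_map p rs lift_matrix (canonical p rs (type_seq p rs x)) ! i = x ! i"
    using lift_row_scaling lift_row_transfer by (cases "v i = E i") (simp_all add: mat_map_def)
qed

lemma aut_orbit_type_seq: "aut_orbit (Gpr p rs) x = aut_orbit (Gpr p rs) (canonical p rs (type_seq p rs x))"
proof -
  have p0: "0 < p" using p_gt_1 by simp
  interpret group "Gpr p rs" by (rule Gpr_group[OF p0])
  let ?f = "\<lambda>y\<in>carrier (Gpr p rs). mat_map p rs lift_matrix y"
  have "?f \<in> auto (Gpr p rs)"
    by (rule mat_map_auto[OF p sorted lift_matrix_compatible lift_matrix_diagonal])
  moreover have "?f (canonical p rs (type_seq p rs x)) = x"
    using canonical_carrier[OF p0] lift_matrix_canonical by simp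
  ultimately show ?thesis using aut_orbit_auto_eq canonical_carrier[OF p0] by metis
qed

end

section \<open>Counting admissible sequences\<close>

lemma admissible_snoc:
  "admissible (rs @ [r]) (e @ [y]) \<longleftrightarrow>
     admissible rs e \<and> y \<le> r \<and> (\<forall>i<length rs. e ! i \<le> y \<and> y + rs ! i \<le> e ! i + r)"
proof (cases "length e = length rs")
  case True
  let ?K = "length rs"
  have e_nth: "(e @ [y]) ! i = (if i < ?K then e ! i else y)" if "i \<le> ?K" for i
    using that True by (simp add: nth_append)
  have r_nth: "(rs @ [r]) ! i = (if i < ?K then rs ! i else r)" if "i \<le> ?K" for i
    using that by (simp add: nth_append)
  have all_le: "(\<forall>i<Suc ?K. P i) \<longleftrightarrow> (\<forall>i<?K. P i) \<and> P ?K" for P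
    by (auto simp: less_Suc_eq)
  have all_pairs: "(\<forall>i j. i < j \<longrightarrow> j < Suc ?K \<longrightarrow> Q i j) \<longleftrightarrow>
      (\<forall>i j. i < j \<longrightarrow> j < ?K \<longrightarrow> Q i j) \<and> (\<forall>i<?K. Q i ?K)" for Q
    by (auto simp: less_Suc_eq)
  show ?thesis
    unfolding admissible_def using True
    by (simp add: all_le all_pairs e_nth r_nth less_imp_le cong: conj_cong) blast
next
  case False
  then show ?thesis by (simp add: admissible_def)
qed

text \<open>For a nonempty strictly increasing \<open>rs @ [r]\<close> only the last old entry matters: the
  admissible extensions of \<open>e\<close> are the \<open>y\<close> with \<open>e\<^sub>K \<le> y \<le> e\<^sub>K + (r - r\<^sub>K)\<close>.\<close>

lemma admissible_extensions:
  assumes adm: "admissible rs e" and ne: "rs \<noteq> []" and sorted: "sorted_wrt (<) (rs @ [r])"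
  shows "{y. admissible (rs @ [r]) (e @ [y])} = {last e .. last e + (r - last rs)}"
proof -
  let ?L = "length rs - 1"
  have L: "?L < length rs" using ne by simp
  have "e \<noteq> []" using ne admissible_length[OF adm] by auto
  then have last_e: "last e = e ! ?L" and last_rs: "last rs = rs ! ?L"
    using ne admissible_length[OF adm] by (simp_all add: last_conv_nth)
  have gap: "rs ! ?L < r"
    using sorted_wrt_nth_less[OF sorted, of ?L "length rs"] L by (simp add: nth_append)
  have "y \<le> r \<and> (\<forall>i<length rs. e ! i \<le> y \<and> y + rs ! i \<le> e ! i + r) \<longleftrightarrow>
      e ! ?L \<le> y \<and> y \<le> e ! ?L + (r - rs ! ?L)" for y
  proof
    assume "y \<le> r \<and> (\<forall>i<length rs. e ! i \<le> y \<and> y + rs ! i \<le> e ! i + r)"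
    then show "e ! ?L \<le> y \<and> y \<le> e ! ?L + (r - rs ! ?L)" using L gap by force
  next
    assume y: "e ! ?L \<le> y \<and> y \<le> e ! ?L + (r - rs ! ?L)"
    have "e ! i \<le> y \<and> y + rs ! i \<le> e ! i + r" if i: "i < length rs" for i
    proof (cases "i = ?L")
      case False
      then have "i < ?L" using i by simp
      then show ?thesis
        using admissible_mono[OF adm _ L, of i] admissible_increment[OF adm _ L, of i] y gap by linarith
    qed (use y gap in \<open>simp, linarith\<close>)
    moreover have "y \<le> r" using y gap admissible_le[OF adm L] by linarith
    ultimately show "y \<le> r \<and> (\<forall>i<length rs. e ! i \<le> y \<and> y + rs ! i \<le> e ! i + r)" by blast
  qed
  then show ?thesis using adm by (auto simp: admissible_snoc last_e last_rs)
qed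

text \<open>Every admissible sequence for \<open>rs @ [r]\<close> arises uniquely by extending one for \<open>rs\<close>, so
  their number is a sum over the admissible sequences for \<open>rs\<close>.\<close>

lemma card_admissible_snoc:
  assumes fin: "finite {e. admissible rs e}"
  shows "finite {e. admissible (rs @ [r]) e} \<and>
    card {e. admissible (rs @ [r]) e} = (\<Sum>e | admissible rs e. card {y. admissible (rs @ [r]) (e @ [y])})"
proof -
  let ?S = "SIGMA e:{e. admissible rs e}. {y. admissible (rs @ [r]) (e @ [y])}"
  have "{e. admissible (rs @ [r]) e} = (\<lambda>(e, y). e @ [y]) ` ?S"
  proof (intro equalityI subsetI)
    fix e' assume "e' \<in> {e. admissible (rs @ [r]) e}"
    then have adm': "admissible (rs @ [r]) e'" by simp
    have split: "e' = butlast e' @ [last e']"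
      using admissible_length[OF adm'] by (intro append_butlast_last_id[symmetric]) auto
    with adm' have "admissible (rs @ [r]) (butlast e' @ [last e'])" by simp
    then have "(butlast e', last e') \<in> ?S" using admissible_snoc by blast
    with split show "e' \<in> (\<lambda>(e, y). e @ [y]) ` ?S" by (intro image_eqI[of _ _ "(butlast e', last e')"]) auto
  qed (auto simp: admissible_snoc)
  moreover have "inj_on (\<lambda>(e, y). e @ [y]) ?S" by (auto simp: inj_on_def)
  moreover have "finite {y. admissible (rs @ [r]) (e @ [y])}" for e
    by (rule finite_subset[of _ "{..r}"]) (auto simp: admissible_snoc)
  ultimately show ?thesis using fin by (simp add: card_image)
qed

lemma gap_prod_snoc:
  assumes "rs \<noteq> []"
  shows "(\<Prod>i<length (rs @ [r]) - 1. (rs @ [r]) ! (i + 1) - (rs @ [r]) ! i + 1) =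
    (\<Prod>i<length rs - 1. rs ! (i + 1) - rs ! i + 1) * (r - last rs + 1)"
proof -
  obtain n where n: "length rs = Suc n" using assms by (cases rs) auto
  have "(\<Prod>i<length (rs @ [r]) - 1. (rs @ [r]) ! (i + 1) - (rs @ [r]) ! i + 1) =
      (\<Prod>i<n. (rs @ [r]) ! (i + 1) - (rs @ [r]) ! i + 1) * ((rs @ [r]) ! (n + 1) - (rs @ [r]) ! n + 1)"
    using n by simp
  also have "(\<Prod>i<n. (rs @ [r]) ! (i + 1) - (rs @ [r]) ! i + 1) = (\<Prod>i<n. rs ! (i + 1) - rs ! i + 1)"
    using n by (intro prod.cong) (auto simp: nth_append)
  finally show ?thesis using assms n by (simp add: nth_append last_conv_nth)
qed

text \<open>The number of admissible sequences is \<open>(r\<^sub>1 + 1) \<Prod>\<^sub>i (r\<^sub>i\<^sub>+\<^sub>1 - r\<^sub>i + 1)\<close>: the first entry ranges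
  over \<open>0..r\<^sub>1\<close>, and each further entry exceeds its predecessor by \<open>0..r\<^sub>i\<^sub>+\<^sub>1 - r\<^sub>i\<close>.\<close>

lemma card_admissible:
  assumes "rs \<noteq> []" and "sorted_wrt (<) rs"
  shows "finite {e. admissible rs e} \<and>
    card {e. admissible rs e} = (rs ! 0 + 1) * (\<Prod>i<length rs - 1. rs ! (i + 1) - rs ! i + 1)"
  using assms
proof (induction rs rule: rev_induct)
  case (snoc r rs)
  show ?case
  proof (cases "rs = []")
    case True
    have "{e. admissible [] e} = {[]}" by (auto simp: admissible_def)
    moreover have "{y. admissible [r] [y]} = {..r}"
      using admissible_snoc[of "[]" r "[]"] by (auto simp: admissible_def)
    ultimately show ?thesis using True card_admissible_snoc[of "[]" r] by simp
  next
    case False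
    have sorted: "sorted_wrt (<) rs" using snoc.prems(2) by (simp add: sorted_wrt_append)
    have IH: "finite {e. admissible rs e}"
      "card {e. admissible rs e} = (rs ! 0 + 1) * (\<Prod>i<length rs - 1. rs ! (i + 1) - rs ! i + 1)"
      using snoc.IH[OF False sorted] by blast+
    have "card {y. admissible (rs @ [r]) (e @ [y])} = r - last rs + 1"
      if "e \<in> {e. admissible rs e}" for e
      using admissible_extensions[of rs e r] that False snoc.prems(2) by simp
    then have "card {e. admissible (rs @ [r]) e} = card {e. admissible rs e} * (r - last rs + 1)"
      using card_admissible_snoc[OF IH(1), of r] by simp
    also have "\<dots> = (rs ! 0 + 1) * ((\<Prod>i<length rs - 1. rs ! (i + 1) - rs ! i + 1) * (r - last rs + 1))"
      by (simp only: IH(2) mult.assoc)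
    also have "\<dots> = ((rs @ [r]) ! 0 + 1) *
        (\<Prod>i<length (rs @ [r]) - 1. (rs @ [r]) ! (i + 1) - (rs @ [r]) ! i + 1)"
      using False by (simp only: gap_prod_snoc[OF False]) (simp add: nth_append)
    finally show ?thesis using card_admissible_snoc[OF IH(1), of r] by blast
  qed
qed simp

lemma aut_orbits_Gpr:
  assumes p: "prime p" and sorted: "sorted_wrt (<) rs"
  shows "aut_orbits (Gpr p rs) = (\<lambda>e. aut_orbit (Gpr p rs) (canonical p rs e)) ` {e. admissible rs e}"
proof (intro equalityI subsetI)
  fix X assume "X \<in> aut_orbits (Gpr p rs)"
  then obtain x where "x \<in> carrier (Gpr p rs)" and "X = aut_orbit (Gpr p rs) x"
    by (auto simp: aut_orbits_def)
  then show "X \<in> (\<lambda>e. aut_orbit (Gpr p rs) (canonical p rs e)) ` {e. admissible rs e}"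
    using aut_orbit_type_seq[OF p sorted] admissible_type_seq[OF p sorted] by blast
next
  fix X assume "X \<in> (\<lambda>e. aut_orbit (Gpr p rs) (canonical p rs e)) ` {e. admissible rs e}"
  then show "X \<in> aut_orbits (Gpr p rs)"
    using canonical_carrier[of p rs] prime_gt_0_nat[OF p] by (auto simp: aut_orbits_def)
qed

theorem proposition2:
  fixes p :: nat and rs :: "nat list"
  assumes "prime p"
    and "rs \<noteq> []"
    and "1 \<le> rs ! 0"
    and "sorted_wrt (<) rs"
  shows "card (aut_orbits (Gpr p rs)) =
           (rs ! 0 + 1) * (\<Prod>i<length rs - 1. (rs ! (i + 1) - rs ! i + 1))"
proof -
  have "card (aut_orbits (Gpr p rs)) = card {e. admissible rs e}"
    unfolding aut_orbits_Gpr[OF assms(1,4)] using canonical_orbit_inj[OF assms(1)] by (rule card_image)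
  also have "\<dots> = (rs ! 0 + 1) * (\<Prod>i<length rs - 1. (rs ! (i + 1) - rs ! i + 1))"
    using card_admissible[OF assms(2,4)] by blast
  finally show ?thesis .
qed

end
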